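(* Let $M$ be a compact translating soliton with boundary in $\mathbb{H}^2\times\mathbb{R}$. Then the height function of $M$ cannot attain a local maximum at any interior point of $M$.
   Context: $\mathbb{H}^2\times\mathbb{R}$ carries the product metric $\langle\cdot,\cdot\rangle$ of the hyperbolic plane of curvature $-1$ and the real line; the height function is the projection onto $\mathbb{R}$ and $\partial_z$ its gradient. An oriented immersed surface $M$ with unit normal $\eta$ and mean curvature $H_M$ (half the trace of the second fundamental form with respect to $\eta$) is a translating soliton if $H_M=\langle\eta,\partial_z\rangle$ at every point. *)

theory Defs
  imports "HOL-Analysis.Analysis"
begin

text \<open>Model of H^2 x R: the upper half-space {(x,y,z). y > 0} with the product metric
  (dx^2 + dy^2)/y^2 + dz^2 (upper half-plane model of the hyperbolic plane of curvature -1,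
  times the real line).\<close>

type_synonym pt3 = "real \<times> real \<times> real"

definition in_H2R :: "pt3 \<Rightarrow> bool" where
  "in_H2R q \<longleftrightarrow> fst (snd q) > 0"

definition height :: "pt3 \<Rightarrow> real" where
  "height q = snd (snd q)"

definition gH :: "pt3 \<Rightarrow> pt3 \<Rightarrow> pt3 \<Rightarrow> real" where
  "gH q v w = (fst v * fst w + fst (snd v) * fst (snd w)) / (fst (snd q))^2
              + snd (snd v) * snd (snd w)"

text \<open>Gradient of the height function, partial_z.\<close>
definition dz :: pt3 where "dz = (0, 0, 1)"

text \<open>Christoffel term Gamma(q)(v,w) of the Levi-Civita connection of gH:
  Gamma^x_xy = Gamma^x_yx = -1/y, Gamma^y_xx = 1/y, Gamma^y_yy = -1/y, all others 0.\<close>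
definition Gam :: "pt3 \<Rightarrow> pt3 \<Rightarrow> pt3 \<Rightarrow> pt3" where
  "Gam q v w =
     (- (fst v * fst (snd w) + fst (snd v) * fst w) / fst (snd q),
      (fst v * fst w - fst (snd v) * fst (snd w)) / fst (snd q),
      0)"

definition ecoord :: "nat \<Rightarrow> real \<times> real" where
  "ecoord i = (if i = 0 then (1, 0) else (0, 1))"

definition pd :: "(real \<times> real \<Rightarrow> pt3) \<Rightarrow> nat \<Rightarrow> real \<times> real \<Rightarrow> pt3" where
  "pd X i p = frechet_derivative X (at p) (ecoord i)"

definition pd2 :: "(real \<times> real \<Rightarrow> pt3) \<Rightarrow> nat \<Rightarrow> nat \<Rightarrow> real \<times> real \<Rightarrow> pt3" where
  "pd2 X i j p = pd (pd X j) i p"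

definition C2_immersion :: "(real \<times> real) set \<Rightarrow> (real \<times> real \<Rightarrow> pt3) \<Rightarrow> bool" where
  "C2_immersion U X \<longleftrightarrow>
     open U \<and>
     (\<forall>p\<in>U. in_H2R (X p)) \<and>
     (\<forall>p\<in>U. X differentiable (at p)) \<and>
     (\<forall>j\<in>{0,1}. \<forall>p\<in>U. pd X j differentiable (at p)) \<and>
     (\<forall>i\<in>{0,1}. \<forall>j\<in>{0,1}. continuous_on U (pd2 X i j)) \<and>
     (\<forall>p\<in>U. \<forall>a b. a *\<^sub>R pd X 0 p + b *\<^sub>R pd X 1 p = 0 \<longrightarrow> a = 0 \<and> b = 0)"

definition unit_normal :: "(real \<times> real) set \<Rightarrow> (real \<times> real \<Rightarrow> pt3) \<Rightarrow> (real \<times> real \<Rightarrow> pt3) \<Rightarrow> bool" where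
  "unit_normal U X eta \<longleftrightarrow>
     continuous_on U eta \<and>
     (\<forall>p\<in>U. gH (X p) (eta p) (eta p) = 1 \<and>
             gH (X p) (eta p) (pd X 0 p) = 0 \<and> gH (X p) (eta p) (pd X 1 p) = 0)"

text \<open>First fundamental form g_ij and second fundamental form
  h_ij = < nabla_{X_i} X_j , eta > with respect to eta.\<close>
definition fff :: "(real \<times> real \<Rightarrow> pt3) \<Rightarrow> nat \<Rightarrow> nat \<Rightarrow> real \<times> real \<Rightarrow> real" where
  "fff X i j p = gH (X p) (pd X i p) (pd X j p)"

definition sff :: "(real \<times> real \<Rightarrow> pt3) \<Rightarrow> (real \<times> real \<Rightarrow> pt3) \<Rightarrow> nat \<Rightarrow> nat \<Rightarrow> real \<times> real \<Rightarrow> real" where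
  "sff X eta i j p = gH (X p) (pd2 X i j p + Gam (X p) (pd X i p) (pd X j p)) (eta p)"

text \<open>Mean curvature: half the trace of the second fundamental form, H = (1/2) g^{ij} h_ij.\<close>
definition mean_curv :: "(real \<times> real \<Rightarrow> pt3) \<Rightarrow> (real \<times> real \<Rightarrow> pt3) \<Rightarrow> real \<times> real \<Rightarrow> real" where
  "mean_curv X eta p =
     (fff X 1 1 p * sff X eta 0 0 p - 2 * fff X 0 1 p * sff X eta 0 1 p
        + fff X 0 0 p * sff X eta 1 1 p)
     / (2 * (fff X 0 0 p * fff X 1 1 p - (fff X 0 1 p)^2))"

definition translating_soliton :: "(real \<times> real) set \<Rightarrow> (real \<times> real \<Rightarrow> pt3) \<Rightarrow> (real \<times> real \<Rightarrow> pt3) \<Rightarrow> bool" where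
  "translating_soliton U X eta \<longleftrightarrow>
     C2_immersion U X \<and> unit_normal U X eta \<and>
     (\<forall>p\<in>U. mean_curv X eta p = gH (X p) (eta p) dz)"

end

theory Submission imports Defs begin

(* At an interior maximum of the height the tangent plane is horizontal, so the unit normal is
   e d_z with e = 1 or e = -1, and the soliton equation reads H = e.  The Christoffel symbols of
   H^2 x R have no vertical component, so the second fundamental form is e times the coordinate
   Hessian of the height, and H = e forces the g-trace of that Hessian to be 2.  But at a maximum
   the Hessian (symmetric by Schwarz's theorem) is negative semidefinite, so its trace against
   the positive definite first fundamental form is nonpositive. *)

lemma bounded_linear_height: "bounded_linear height"
  unfolding height_def by (intro bounded_linear_compose[OF bounded_linear_snd] bounded_linear_snd)

lemma has_derivative_height_comp:
  fixes G :: "real \<times> real \<Rightarrow> pt3"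
  assumes "G differentiable (at q)"
  shows "((\<lambda>x. height (G x)) has_derivative
           (\<lambda>v. fst v * height (pd G 0 q) + snd v * height (pd G 1 q))) (at q)"
proof -
  let ?L = "frechet_derivative G (at q)"
  have G': "(G has_derivative ?L) (at q)" using assms frechet_derivative_works by blast
  have lin: "linear ?L" using G' has_derivative_linear by blast
  have "((\<lambda>x. height (G x)) has_derivative (\<lambda>v. height (?L v))) (at q)"
    using bounded_linear.has_derivative[OF bounded_linear_height G'] .
  moreover have "height (?L v) = fst v * height (pd G 0 q) + snd v * height (pd G 1 q)" for v
  proof -
    have "?L v = ?L (fst v *\<^sub>R (1, 0) + snd v *\<^sub>R (0, 1))" by (cases v) simp
    also have "\<dots> = fst v *\<^sub>R ?L (1, 0) + snd v *\<^sub>R ?L (0, 1)"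
      by (simp only: linear_add[OF lin] linear_cmul[OF lin])
    finally show ?thesis by (simp add: pd_def ecoord_def height_def)
  qed
  ultimately show ?thesis by simp
qed

lemma has_real_derivative_along_line:
  fixes \<phi> :: "'a::real_normed_vector \<Rightarrow> real"
  assumes "(\<phi> has_derivative L) (at (q + t *\<^sub>R v))"
  shows "((\<lambda>s. \<phi> (q + s *\<^sub>R v)) has_real_derivative L v) (at t)"
proof -
  have "((\<lambda>s. q + s *\<^sub>R v) has_derivative (\<lambda>h. h *\<^sub>R v)) (at t)"
    by (auto intro!: derivative_eq_intros)
  from has_derivative_compose[OF this assms]
  have "((\<lambda>s. \<phi> (q + s *\<^sub>R v)) has_derivative (\<lambda>h. L (h *\<^sub>R v))) (at t)" .
  moreover have "(\<lambda>h. L (h *\<^sub>R v)) = (*) (L v)"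
    using linear_cmul[OF has_derivative_linear[OF assms]] by (auto simp: mult.commute)
  ultimately show ?thesis by (simp add: has_field_derivative_def)
qed

lemma has_real_derivative_partial_fst:
  fixes \<phi> :: "real \<times> real \<Rightarrow> real"
  assumes "(\<phi> has_derivative L) (at (p + (s, t)))"
  shows "((\<lambda>s. \<phi> (p + (s, t))) has_real_derivative L (1, 0)) (at s)"
  using has_real_derivative_along_line[of \<phi> L "p + (0, t)" s "(1, 0)"] assms
  by (simp add: add.assoc)

lemma has_real_derivative_partial_snd:
  fixes \<phi> :: "real \<times> real \<Rightarrow> real"
  assumes "(\<phi> has_derivative L) (at (p + (s, t)))"
  shows "((\<lambda>t. \<phi> (p + (s, t))) has_real_derivative L (0, 1)) (at t)"
  using has_real_derivative_along_line[of \<phi> L "p + (s, 0)" t "(0, 1)"] assms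
  by (simp add: add.assoc)

lemma local_max_second_derivative_nonpos:
  fixes g g' :: "real \<Rightarrow> real"
  assumes "d > 0"
    and g': "\<And>t. \<bar>t\<bar> < d \<Longrightarrow> (g has_real_derivative g' t) (at t)"
    and g'': "(g' has_real_derivative c) (at 0)"
    and max: "\<And>t. \<bar>t\<bar> < d \<Longrightarrow> g t \<le> g 0"
  shows "c \<le> 0"
proof (rule ccontr)
  assume "\<not> c \<le> 0"
  then obtain d' where "d' > 0" and inc: "\<And>h. 0 < h \<Longrightarrow> h < d' \<Longrightarrow> g' 0 < g' h"
    using DERIV_pos_inc_right[OF g''] by auto
  have "g' 0 = 0"
    using DERIV_local_max[OF g'[of 0] \<open>d > 0\<close>] max \<open>d > 0\<close> by simp
  define h where "h = min d d' / 2"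
  have h: "0 < h" "h < d" "h < d'" using \<open>d > 0\<close> \<open>d' > 0\<close> unfolding h_def by auto
  obtain z where "0 < z" "z < h" "g h - g 0 = h * g' z"
    using MVT2[of 0 h g g'] g' h by auto
  then have "g 0 < g h" using \<open>g' 0 = 0\<close> inc[of z] h by (simp add: algebra_simps)
  then show False using max[of h] h by simp
qed

lemma local_max_gradient_eq_0:
  fixes f :: "real \<times> real \<Rightarrow> real" and F :: "nat \<Rightarrow> real \<times> real \<Rightarrow> real"
  assumes "r > 0"
    and max: "\<And>q. dist q p < r \<Longrightarrow> f q \<le> f p"
    and f': "(f has_derivative (\<lambda>v. fst v * F 0 p + snd v * F 1 p)) (at p)"
  shows "F 0 p = 0" and "F 1 p = 0"
proof -
  have "fst v * F 0 p + snd v * F 1 p = 0" if "norm v = 1" for v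
  proof (rule DERIV_local_max)
    show "((\<lambda>t. f (p + t *\<^sub>R v)) has_real_derivative fst v * F 0 p + snd v * F 1 p) (at 0)"
      using has_real_derivative_along_line[of f _ p 0 v] f' by simp
    show "\<forall>t. \<bar>0 - t\<bar> < r \<longrightarrow> f (p + t *\<^sub>R v) \<le> f (p + 0 *\<^sub>R v)"
      using max that by (simp add: dist_norm)
  qed fact
  from this[of "(1, 0)"] this[of "(0, 1)"] show "F 0 p = 0" and "F 1 p = 0" by simp_all
qed

lemma local_max_hessian_nonpos:
  fixes f :: "real \<times> real \<Rightarrow> real" and F :: "nat \<Rightarrow> real \<times> real \<Rightarrow> real"
    and S :: "nat \<Rightarrow> nat \<Rightarrow> real \<times> real \<Rightarrow> real"
  assumes "r > 0"
    and max: "\<And>q. dist q p < r \<Longrightarrow> f q \<le> f p"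
    and f': "\<And>q. dist q p < r \<Longrightarrow> (f has_derivative (\<lambda>v. fst v * F 0 q + snd v * F 1 q)) (at q)"
    and F': "\<And>j. j \<in> {0, 1} \<Longrightarrow>
               (F j has_derivative (\<lambda>v. fst v * S 0 j p + snd v * S 1 j p)) (at p)"
  shows "a * (a * S 0 0 p + b * S 1 0 p) + b * (a * S 0 1 p + b * S 1 1 p) \<le> 0"
proof (rule local_max_second_derivative_nonpos)
  define v where "v = (a, b)"
  define d where "d = r / (norm v + 1)"
  show "d > 0" unfolding d_def using \<open>r > 0\<close> by (simp add: add_nonneg_pos)
  have near: "dist (p + t *\<^sub>R v) p < r" if "\<bar>t\<bar> < d" for t
  proof -
    have "\<bar>t\<bar> * norm v + \<bar>t\<bar> < r"
      using that \<open>r > 0\<close> unfolding d_def by (simp add: pos_less_divide_eq add_nonneg_pos distrib_left)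
    then show ?thesis by (simp add: dist_norm)
  qed
  show "((\<lambda>t. f (p + t *\<^sub>R v)) has_real_derivative a * F 0 (p + t *\<^sub>R v) + b * F 1 (p + t *\<^sub>R v))
          (at t)" if "\<bar>t\<bar> < d" for t
    using has_real_derivative_along_line[OF f'[OF near[OF that]]] by (simp add: v_def)
  show "f (p + t *\<^sub>R v) \<le> f (p + 0 *\<^sub>R v)" if "\<bar>t\<bar> < d" for t
    using max[OF near[OF that]] by simp
  have "((\<lambda>t. F j (p + t *\<^sub>R v)) has_real_derivative a * S 0 j p + b * S 1 j p) (at 0)"
    if "j \<in> {0, 1}" for j
  proof -
    have "(F j has_derivative (\<lambda>v. fst v * S 0 j p + snd v * S 1 j p)) (at (p + 0 *\<^sub>R v))"
      using F'[OF that] by simp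
    from has_real_derivative_along_line[OF this] show ?thesis by (simp add: v_def)
  qed
  then show "((\<lambda>t. a * F 0 (p + t *\<^sub>R v) + b * F 1 (p + t *\<^sub>R v)) has_real_derivative
      a * (a * S 0 0 p + b * S 1 0 p) + b * (a * S 0 1 p + b * S 1 1 p)) (at 0)"
    by (auto intro!: derivative_eq_intros)
qed

lemma second_difference_eq_mixed_partial:
  fixes f fx fxy :: "real \<Rightarrow> real \<Rightarrow> real"
  assumes "h > 0"
    and fx: "\<And>s t. 0 \<le> s \<Longrightarrow> s \<le> h \<Longrightarrow> 0 \<le> t \<Longrightarrow> t \<le> h \<Longrightarrow>
               ((\<lambda>s. f s t) has_real_derivative fx s t) (at s)"
    and fxy: "\<And>s t. 0 \<le> s \<Longrightarrow> s \<le> h \<Longrightarrow> 0 \<le> t \<Longrightarrow> t \<le> h \<Longrightarrow>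
               ((\<lambda>t. fx s t) has_real_derivative fxy s t) (at t)"
  shows "\<exists>\<xi> \<eta>. 0 < \<xi> \<and> \<xi> < h \<and> 0 < \<eta> \<and> \<eta> < h \<and>
           f h h - f h 0 - (f 0 h - f 0 0) = h * (h * fxy \<xi> \<eta>)"
proof -
  have "((\<lambda>s. f s h - f s 0) has_real_derivative fx s h - fx s 0) (at s)" if "0 \<le> s" "s \<le> h" for s
    using that \<open>h > 0\<close> by (intro DERIV_diff fx) auto
  then obtain \<xi> where \<xi>: "0 < \<xi>" "\<xi> < h" "f h h - f h 0 - (f 0 h - f 0 0) = h * (fx \<xi> h - fx \<xi> 0)"
    using MVT2[of 0 h "\<lambda>s. f s h - f s 0" "\<lambda>s. fx s h - fx s 0"] \<open>h > 0\<close> by auto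
  have "(fx \<xi> has_real_derivative fxy \<xi> t) (at t)" if "0 \<le> t" "t \<le> h" for t
    using fxy \<xi> that by simp
  then obtain \<eta> where "0 < \<eta>" "\<eta> < h" "fx \<xi> h - fx \<xi> 0 = h * fxy \<xi> \<eta>"
    using MVT2[of 0 h "fx \<xi>" "fxy \<xi>"] \<open>h > 0\<close> by auto
  with \<xi> show ?thesis by auto
qed

lemma mixed_partials_eq:
  fixes f :: "real \<times> real \<Rightarrow> real" and F :: "nat \<Rightarrow> real \<times> real \<Rightarrow> real"
    and S :: "nat \<Rightarrow> nat \<Rightarrow> real \<times> real \<Rightarrow> real"
  assumes "r > 0"
    and f': "\<And>q. dist q p < r \<Longrightarrow> (f has_derivative (\<lambda>v. fst v * F 0 q + snd v * F 1 q)) (at q)"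
    and F': "\<And>q j. dist q p < r \<Longrightarrow> j \<in> {0, 1} \<Longrightarrow>
               (F j has_derivative (\<lambda>v. fst v * S 0 j q + snd v * S 1 j q)) (at q)"
    and "isCont (S 1 0) p" and "isCont (S 0 1) p"
  shows "S 1 0 p = S 0 1 p"
proof -
  have "\<bar>S 1 0 p - S 0 1 p\<bar> < 2 * \<epsilon>" if "\<epsilon> > 0" for \<epsilon>
  proof -
    obtain \<delta>1 where "\<delta>1 > 0" and \<delta>1: "\<And>q. dist q p < \<delta>1 \<Longrightarrow> \<bar>S 1 0 q - S 1 0 p\<bar> < \<epsilon>"
      using \<open>isCont (S 1 0) p\<close> \<open>\<epsilon> > 0\<close> unfolding continuous_at_eps_delta dist_real_def by blast
    obtain \<delta>2 where "\<delta>2 > 0" and \<delta>2: "\<And>q. dist q p < \<delta>2 \<Longrightarrow> \<bar>S 0 1 q - S 0 1 p\<bar> < \<epsilon>"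
      using \<open>isCont (S 0 1) p\<close> \<open>\<epsilon> > 0\<close> unfolding continuous_at_eps_delta dist_real_def by blast
    define \<rho> where "\<rho> = min r (min \<delta>1 \<delta>2)"
    define h where "h = \<rho> / 3"
    have "h > 0" using \<open>r > 0\<close> \<open>\<delta>1 > 0\<close> \<open>\<delta>2 > 0\<close> unfolding h_def \<rho>_def by simp
    have near: "dist (p + (s, t)) p < \<rho>" if "0 \<le> s" "s \<le> h" "0 \<le> t" "t \<le> h" for s t
      using norm_Pair_le[of s t] that \<open>h > 0\<close> unfolding h_def by (simp add: dist_norm)
    have inner: "dist (p + (s, t)) p < r" if "0 \<le> s" "s \<le> h" "0 \<le> t" "t \<le> h" for s t
      using near[OF that] unfolding \<rho>_def by simp
    obtain \<xi> \<eta> where \<xi>\<eta>: "0 < \<xi>" "\<xi> < h" "0 < \<eta>" "\<eta> < h"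
      "f (p + (h, h)) - f (p + (h, 0)) - (f (p + (0, h)) - f (p + (0, 0))) = h * (h * S 1 0 (p + (\<xi>, \<eta>)))"
    proof -
      have fx: "((\<lambda>s. f (p + (s, t))) has_real_derivative F 0 (p + (s, t))) (at s)"
        and fxy: "((\<lambda>t. F 0 (p + (s, t))) has_real_derivative S 1 0 (p + (s, t))) (at t)"
        if "0 \<le> s" "s \<le> h" "0 \<le> t" "t \<le> h" for s t
        using has_real_derivative_partial_fst[OF f'[OF inner[OF that]]]
          has_real_derivative_partial_snd[OF F'[OF inner[OF that], of 0]] by simp_all
      show ?thesis
        using second_difference_eq_mixed_partial[of h "\<lambda>s t. f (p + (s, t))"
            "\<lambda>s t. F 0 (p + (s, t))" "\<lambda>s t. S 1 0 (p + (s, t))", OF \<open>h > 0\<close> fx fxy] that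
        by blast
    qed
    obtain \<xi>' \<eta>' where \<xi>'\<eta>': "0 < \<xi>'" "\<xi>' < h" "0 < \<eta>'" "\<eta>' < h"
      "f (p + (h, h)) - f (p + (0, h)) - (f (p + (h, 0)) - f (p + (0, 0))) = h * (h * S 0 1 (p + (\<eta>', \<xi>')))"
    proof -
      have fy: "((\<lambda>t. f (p + (s, t))) has_real_derivative F 1 (p + (s, t))) (at t)"
        and fyx: "((\<lambda>s. F 1 (p + (s, t))) has_real_derivative S 0 1 (p + (s, t))) (at s)"
        if "0 \<le> t" "t \<le> h" "0 \<le> s" "s \<le> h" for t s
        using has_real_derivative_partial_snd[OF f'[OF inner[OF that(3,4,1,2)]]]
          has_real_derivative_partial_fst[OF F'[OF inner[OF that(3,4,1,2)], of 1]] by simp_all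
      show ?thesis
        using second_difference_eq_mixed_partial[of h "\<lambda>t s. f (p + (s, t))"
            "\<lambda>t s. F 1 (p + (s, t))" "\<lambda>t s. S 0 1 (p + (s, t))", OF \<open>h > 0\<close> fy fyx] that
        by blast
    qed
    have "S 1 0 (p + (\<xi>, \<eta>)) = S 0 1 (p + (\<eta>', \<xi>'))"
      using \<xi>\<eta>(5) \<xi>'\<eta>'(5) \<open>h > 0\<close> by (simp add: algebra_simps)
    moreover have "\<bar>S 1 0 (p + (\<xi>, \<eta>)) - S 1 0 p\<bar> < \<epsilon>"
      using \<delta>1 near[of \<xi> \<eta>] \<xi>\<eta> unfolding \<rho>_def by simp
    moreover have "\<bar>S 0 1 (p + (\<eta>', \<xi>')) - S 0 1 p\<bar> < \<epsilon>"
      using \<delta>2 near[of \<eta>' \<xi>'] \<xi>'\<eta>' unfolding \<rho>_def by simp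
    ultimately show ?thesis by linarith
  qed
  from this[of "\<bar>S 1 0 p - S 0 1 p\<bar> / 2"] show ?thesis by (cases "S 1 0 p = S 0 1 p") auto
qed

lemma C2_immersion_height_local_max:
  assumes imm: "C2_immersion U X" and "p \<in> U" and "e > 0"
    and max: "\<forall>q\<in>U. dist q p < e \<longrightarrow> height (X q) \<le> height (X p)"
  shows "height (pd X 0 p) = 0" and "height (pd X 1 p) = 0"
    and "a * (a * height (pd2 X 0 0 p) + b * height (pd2 X 0 1 p))
         + b * (a * height (pd2 X 0 1 p) + b * height (pd2 X 1 1 p)) \<le> 0"
proof -
  define F where "F j q = height (pd X j q)" for j q
  define S where "S i j q = height (pd2 X i j q)" for i j q
  have "open U" and dX: "\<And>q. q \<in> U \<Longrightarrow> X differentiable (at q)"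
    and dpd: "\<And>q j. q \<in> U \<Longrightarrow> j \<in> {0, 1} \<Longrightarrow> pd X j differentiable (at q)"
    and cont: "\<And>i j. i \<in> {0, 1} \<Longrightarrow> j \<in> {0, 1} \<Longrightarrow> continuous_on U (pd2 X i j)"
    using imm unfolding C2_immersion_def by blast+
  obtain r where "r > 0" "ball p r \<subseteq> U"
    using \<open>open U\<close> \<open>p \<in> U\<close> open_contains_ball by blast
  define \<rho> where "\<rho> = min e r"
  have "\<rho> > 0" using \<open>e > 0\<close> \<open>r > 0\<close> unfolding \<rho>_def by simp
  have inU: "q \<in> U" if "dist q p < \<rho>" for q
    using that \<open>ball p r \<subseteq> U\<close> unfolding \<rho>_def by (auto simp: dist_commute)
  have max': "height (X q) \<le> height (X p)" if "dist q p < \<rho>" for q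
    using max inU that unfolding \<rho>_def by simp
  have f': "((\<lambda>q. height (X q)) has_derivative (\<lambda>v. fst v * F 0 q + snd v * F 1 q)) (at q)"
    if "dist q p < \<rho>" for q
    using has_derivative_height_comp[OF dX[OF inU[OF that]]] unfolding F_def .
  have F': "(F j has_derivative (\<lambda>v. fst v * S 0 j q + snd v * S 1 j q)) (at q)"
    if "dist q p < \<rho>" "j \<in> {0, 1}" for q j
    using has_derivative_height_comp[OF dpd[OF inU[OF that(1)] that(2)]]
    unfolding F_def S_def pd2_def .
  have "isCont (S i j) p" if "i \<in> {0, 1}" "j \<in> {0, 1}" for i j
  proof -
    have "isCont (pd2 X i j) p"
      using cont[OF that] \<open>open U\<close> \<open>p \<in> U\<close> continuous_on_eq_continuous_at by blast
    then show ?thesis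
      unfolding S_def using bounded_linear.isCont[OF bounded_linear_height] by blast
  qed
  then have "isCont (S 1 0) p" and "isCont (S 0 1) p" by simp_all
  from mixed_partials_eq[where f="\<lambda>q. height (X q)" and F=F and S=S, OF \<open>\<rho> > 0\<close> f' F' this]
  have "S 1 0 p = S 0 1 p" .
  moreover have F'p: "(F j has_derivative (\<lambda>v. fst v * S 0 j p + snd v * S 1 j p)) (at p)"
    if "j \<in> {0, 1}" for j
    using F'[OF _ that] \<open>\<rho> > 0\<close> by simp
  have "a * (a * S 0 0 p + b * S 1 0 p) + b * (a * S 0 1 p + b * S 1 1 p) \<le> 0"
    by (rule local_max_hessian_nonpos[where f="\<lambda>q. height (X q)" and F=F and S=S, OF \<open>\<rho> > 0\<close> max' f' F'p])
  ultimately show "a * (a * height (pd2 X 0 0 p) + b * height (pd2 X 0 1 p))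
         + b * (a * height (pd2 X 0 1 p) + b * height (pd2 X 1 1 p)) \<le> 0"
    unfolding S_def by simp
  have "((\<lambda>q. height (X q)) has_derivative (\<lambda>v. fst v * F 0 p + snd v * F 1 p)) (at p)"
    using f' \<open>\<rho> > 0\<close> by simp
  from local_max_gradient_eq_0[where f="\<lambda>q. height (X q)" and F=F, OF \<open>\<rho> > 0\<close> max' this]
  show "height (pd X 0 p) = 0" and "height (pd X 1 p) = 0"
    unfolding F_def by simp_all
qed

lemma trace_nonpos_of_neg_semidefinite:
  fixes g00 g01 g11 h00 h01 h11 :: real
  assumes "g00 > 0" and "g00 * g11 - g01\<^sup>2 > 0"
    and neg: "\<And>a b. a * (a * h00 + b * h01) + b * (a * h01 + b * h11) \<le> 0"
  shows "g11 * h00 - 2 * g01 * h01 + g00 * h11 \<le> 0"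
proof -
  have "g00 * (g11 * h00 - 2 * g01 * h01 + g00 * h11)
      = (- g01) * ((- g01) * h00 + g00 * h01) + g00 * ((- g01) * h01 + g00 * h11)
        + (g00 * g11 - g01\<^sup>2) * h00"
    by (simp add: algebra_simps power2_eq_square)
  also have "\<dots> \<le> 0"
    using neg[of "- g01" g00] neg[of 1 0] \<open>g00 * g11 - g01\<^sup>2 > 0\<close>
    by (simp add: add_nonpos_nonpos mult_nonneg_nonpos)
  finally show ?thesis using \<open>g00 > 0\<close> by (simp add: mult_le_0_iff)
qed

lemma horizontal_independent_det_ne_0:
  fixes u w :: pt3
  assumes "height u = 0" and "height w = 0"
    and indep: "\<forall>a b. a *\<^sub>R u + b *\<^sub>R w = 0 \<longrightarrow> a = 0 \<and> b = 0"
  shows "fst u * fst (snd w) - fst (snd u) * fst w \<noteq> 0"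
proof
  obtain x0 y0 x1 y1 where u: "u = (x0, y0, 0)" and w: "w = (x1, y1, 0)"
    using assms(1,2) unfolding height_def by (metis prod.collapse)
  assume "fst u * fst (snd w) - fst (snd u) * fst w = 0"
  then have det: "x0 * y1 = y0 * x1" by (simp add: u w)
  have "y1 *\<^sub>R u + (- y0) *\<^sub>R w = 0" and "x1 *\<^sub>R u + (- x0) *\<^sub>R w = 0"
    using det by (simp_all add: u w zero_prod_def algebra_simps)
  then have "y0 = 0" and "x0 = 0" using indep by fastforce+
  then have "1 *\<^sub>R u + 0 *\<^sub>R w = 0" by (simp add: u zero_prod_def)
  then show False using indep by fastforce
qed

lemma unit_normal_of_horizontal_frame:
  fixes q u w n :: pt3
  assumes "fst (snd q) > 0" and "height u = 0" and "height w = 0"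
    and det: "fst u * fst (snd w) - fst (snd u) * fst w \<noteq> 0"
    and "gH q n u = 0" and "gH q n w = 0" and "gH q n n = 1"
  shows "n = (0, 0, 1) \<or> n = (0, 0, -1)"
proof -
  obtain x0 y0 x1 y1 where u: "u = (x0, y0, 0)" and w: "w = (x1, y1, 0)"
    using assms(2,3) unfolding height_def by (metis prod.collapse)
  obtain n1 n2 n3 where n: "n = (n1, n2, n3)" by (metis prod.collapse)
  have o0: "n1 * x0 + n2 * y0 = 0" and o1: "n1 * x1 + n2 * y1 = 0"
    using assms(1,5,6) by (simp_all add: gH_def u w n)
  have "n1 * (x0 * y1 - y0 * x1) = y1 * (n1 * x0 + n2 * y0) - y0 * (n1 * x1 + n2 * y1)"
    and "n2 * (x0 * y1 - y0 * x1) = x0 * (n1 * x1 + n2 * y1) - x1 * (n1 * x0 + n2 * y0)"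
    by (simp_all add: algebra_simps)
  then have "n1 = 0" and "n2 = 0" using o0 o1 det by (simp_all add: u w)
  moreover have "n3 * n3 = 1" using \<open>gH q n n = 1\<close> \<open>n1 = 0\<close> \<open>n2 = 0\<close> by (simp add: gH_def n)
  then have "n3 = 1 \<or> n3 = -1" by (metis mult_cancel_left1 square_eq_1_iff)
  ultimately show ?thesis by (auto simp: n)
qed

lemma gram_det_pos_horizontal:
  fixes q u w :: pt3
  assumes "fst (snd q) > 0" and "height u = 0" and "height w = 0"
    and det: "fst u * fst (snd w) - fst (snd u) * fst w \<noteq> 0"
  shows "gH q u u > 0" and "gH q u u * gH q w w - (gH q u w)\<^sup>2 > 0"
proof -
  obtain x0 y0 x1 y1 where u: "u = (x0, y0, 0)" and w: "w = (x1, y1, 0)"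
    using assms(2,3) unfolding height_def by (metis prod.collapse)
  define Y where "Y = fst (snd q)"
  have "x0 \<noteq> 0 \<or> y0 \<noteq> 0" using det by (auto simp: u)
  then have "x0 * x0 + y0 * y0 > 0" by (metis add_nonneg_pos add_pos_nonneg not_real_square_gt_zero zero_le_square)
  then show "gH q u u > 0" using assms(1) by (simp add: gH_def u)
  have "gH q u u * gH q w w - (gH q u w)\<^sup>2 = (x0 * y1 - y0 * x1)\<^sup>2 / (Y\<^sup>2)\<^sup>2"
    using assms(1) unfolding Y_def by (simp add: gH_def u w field_simps) (simp add: algebra_simps power2_eq_square)
  then show "gH q u u * gH q w w - (gH q u w)\<^sup>2 > 0"
    using det assms(1) unfolding Y_def by (simp add: u w)
qed

lemma sff_vertical_normal:
  assumes "eta p = (0, 0, e)"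
  shows "sff X eta i j p = e * height (pd2 X i j p)"
  by (simp add: sff_def gH_def Gam_def assms height_def)

theorem proposition5p3:
  fixes U :: "(real \<times> real) set" and X eta :: "real \<times> real \<Rightarrow> real \<times> real \<times> real"
  assumes "translating_soliton U X eta"
    and "p \<in> U"
  shows "\<not> (\<exists>e>0. \<forall>q\<in>U. dist q p < e \<longrightarrow> height (X q) \<le> height (X p))"
proof
  assume "\<exists>e>0. \<forall>q\<in>U. dist q p < e \<longrightarrow> height (X q) \<le> height (X p)"
  then obtain \<epsilon> where "\<epsilon> > 0" and max: "\<forall>q\<in>U. dist q p < \<epsilon> \<longrightarrow> height (X q) \<le> height (X p)"
    by blast
  have imm: "C2_immersion U X" and normal: "unit_normal U X eta"
    and soliton: "mean_curv X eta p = gH (X p) (eta p) dz"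
    using assms unfolding translating_soliton_def by auto
  note crit = C2_immersion_height_local_max[OF imm \<open>p \<in> U\<close> \<open>\<epsilon> > 0\<close> max]
  have "fst (snd (X p)) > 0" and indep: "\<forall>a b. a *\<^sub>R pd X 0 p + b *\<^sub>R pd X 1 p = 0 \<longrightarrow> a = 0 \<and> b = 0"
    using imm \<open>p \<in> U\<close> unfolding C2_immersion_def in_H2R_def by blast+
  note frame = \<open>fst (snd (X p)) > 0\<close> crit(1,2) horizontal_independent_det_ne_0[OF crit(1,2) indep]
  have "gH (X p) (eta p) (pd X 0 p) = 0" and "gH (X p) (eta p) (pd X 1 p) = 0"
    and "gH (X p) (eta p) (eta p) = 1"
    using normal \<open>p \<in> U\<close> unfolding unit_normal_def by auto
  from unit_normal_of_horizontal_frame[OF frame this]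
  obtain e where e: "eta p = (0, 0, e)" and "e \<noteq> 0" by (elim disjE) fastforce+
  define T where "T = fff X 1 1 p * height (pd2 X 0 0 p) - 2 * fff X 0 1 p * height (pd2 X 0 1 p)
                      + fff X 0 0 p * height (pd2 X 1 1 p)"
  define D where "D = fff X 0 0 p * fff X 1 1 p - (fff X 0 1 p)\<^sup>2"
  have "D > 0" and "fff X 0 0 p > 0"
    using gram_det_pos_horizontal[OF frame] unfolding D_def fff_def by simp_all
  have "e * T / (2 * D) = e"
    using soliton sff_vertical_normal[where eta=eta and p=p, OF e]
    by (simp add: mean_curv_def T_def D_def e gH_def dz_def algebra_simps)
  then have "T = 2 * D" using \<open>D > 0\<close> \<open>e \<noteq> 0\<close> by (simp add: field_simps)
  moreover have "T \<le> 0"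
    using trace_nonpos_of_neg_semidefinite[OF \<open>fff X 0 0 p > 0\<close>, of "fff X 1 1 p"] crit(3) \<open>D > 0\<close>
    unfolding T_def D_def by blast
  ultimately show False using \<open>D > 0\<close> by simp
qed

end
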